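(* Let $\mathsf{k}$ be a field of characteristic zero, $S=\mathsf{k}[x_1,\dots,x_n]$ with $n\ge 2$, and $R=\mathsf{k}[X_1,\dots,X_n]$, with $S$ acting on $R$ by differentiation. Let $F\in R$ be a nonzero homogeneous polynomial of degree $d\ge 2$, let $A=S/\operatorname{Ann}_S(F)$, and let $\ell\in S_1$ be a linear form. Then for every $0\le i\le d$, $$\operatorname{diag}(i,M_{\ell,A})=h_{A^{(i)}},$$ i.e. $(M_{\ell,A})_{j,j+i}=\dim_{\mathsf{k}}\big(A^{(i)}\big)_j$ for all $0\le j\le d-i$.
   Context: $x_i$ acts on $R$ as $\partial/\partial X_i$; for $G\in R$, $\operatorname{Ann}_S(G)=\{g\in S: g\circ G=0\}$. $A=S/\operatorname{Ann}_S(F)$ is a graded Artinian Gorenstein algebra of socle degree $d$. For a graded algebra $B$, $h_B(j)=\dim_{\mathsf{k}}B_j$ is its Hilbert function. For $0\le i\le d$, $A^{(i)}:=S/\operatorname{Ann}_S(\ell^i\circ F)$ (the zero algebra if $\ell^i\circ F=0$), whose Hilbert function is viewed as the vector $(h_{A^{(i)}}(0),\dots,h_{A^{(i)}}(d-i))$. The rank matrix $M_{\ell,A}$ is the $(d+1)\times(d+1)$ matrix with rows and columns indexed by $0,\dots,d$, with $(M_{\ell,A})_{i,j}=\operatorname{rank}(\times\ell^{j-i}:A_i\to A_j)$ for $i\le j$ and $(M_{\ell,A})_{i,j}=0$ for $i>j$. For a $(d+1)\times(d+1)$ matrix $M$ and $0\le i\le d$, $\operatorname{diag}(i,M)=(M_{0,i},M_{1,i+1},\dots,M_{d-i,d})$.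 *)

theory Defs
  imports Complex_Main "HOL-Library.Poly_Mapping"
begin

text \<open>Both S = k[x_1..x_n] and R = k[X_1..X_n] are modelled by the polynomials whose
monomials only involve the variables 0,...,n-1.\<close>

type_synonym 'k mpoly = "(nat \<Rightarrow>\<^sub>0 nat) \<Rightarrow>\<^sub>0 'k"

definition smul :: "'k::field \<Rightarrow> 'k mpoly \<Rightarrow> 'k mpoly" where
  "smul c p = Poly_Mapping.map (\<lambda>a. c * a) p"

definition kdim :: "'k::field mpoly set \<Rightarrow> nat" where
  "kdim V = vector_space.dim smul V"

definition kspan :: "'k::field mpoly set \<Rightarrow> 'k mpoly set" where
  "kspan V = module.span smul V"

definition mdeg :: "(nat \<Rightarrow>\<^sub>0 nat) \<Rightarrow> nat" where
  "mdeg m = (\<Sum>i\<in>Poly_Mapping.keys m. Poly_Mapping.lookup m i)"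

definition polys :: "nat \<Rightarrow> 'k::field mpoly set" where
  "polys n = {p. \<forall>m\<in>Poly_Mapping.keys p. Poly_Mapping.keys m \<subseteq> {..<n}}"

definition homog :: "nat \<Rightarrow> nat \<Rightarrow> 'k::field mpoly set" where
  "homog n j = {p \<in> polys n. \<forall>m\<in>Poly_Mapping.keys p. mdeg m = j}"

definition mdvd :: "(nat \<Rightarrow>\<^sub>0 nat) \<Rightarrow> (nat \<Rightarrow>\<^sub>0 nat) \<Rightarrow> bool" where
  "mdvd a b = (\<forall>i. Poly_Mapping.lookup a i \<le> Poly_Mapping.lookup b i)"

text \<open>Contraction by differentiation: x^a acts on X^b as the partial derivative
\<partial>^a X^b = (\<Prod>_i b_i!/(b_i-a_i)!) X^(b-a) if a \<le> b and 0 otherwise,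
extended bilinearly: p \<circ> G.\<close>
definition diff_act :: "'k::field_char_0 mpoly \<Rightarrow> 'k mpoly \<Rightarrow> 'k mpoly" where
  "diff_act p G =
     (\<Sum>a\<in>Poly_Mapping.keys p. \<Sum>b\<in>Poly_Mapping.keys G.
        if mdvd a b then
          Poly_Mapping.single (b - a)
            (Poly_Mapping.lookup p a * Poly_Mapping.lookup G b *
              (\<Prod>i\<in>Poly_Mapping.keys b. fact (Poly_Mapping.lookup b i) / fact (Poly_Mapping.lookup b i - Poly_Mapping.lookup a i)))
        else 0)"

definition Ann :: "nat \<Rightarrow> 'k::field_char_0 mpoly \<Rightarrow> 'k mpoly set" where
  "Ann n G = {g \<in> polys n. diff_act g G = 0}"

text \<open>Hilbert function of S/Ann_S(G): h(j) = dim_k (S_j / Ann_S(G)_j)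
 = dim S_j - dim (Ann_S(G) \<inter> S_j); the zero algebra if G = 0.\<close>
definition hilb :: "nat \<Rightarrow> 'k::field_char_0 mpoly \<Rightarrow> nat \<Rightarrow> nat" where
  "hilb n G j = (if G = 0 then 0
                 else kdim (homog n j :: 'k mpoly set) - kdim (Ann n G \<inter> homog n j))"

text \<open>rank of multiplication by l^(j-i) from A_i to A_j, where A = S/Ann_S(F):
 its image is (l^(j-i) S_i + Ann_j)/Ann_j, so the rank is
 dim(l^(j-i) S_i + Ann_j) - dim Ann_j.\<close>
definition mult_rank :: "nat \<Rightarrow> 'k::field_char_0 mpoly \<Rightarrow> 'k mpoly \<Rightarrow> nat \<Rightarrow> nat \<Rightarrow> nat" where
  "mult_rank n F l i j =
     kdim (kspan ((\<lambda>p. l ^ (j - i) * p) ` homog n i \<union> (Ann n F \<inter> homog n j)))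
       - kdim (Ann n F \<inter> homog n j)"

definition rank_matrix :: "nat \<Rightarrow> 'k::field_char_0 mpoly \<Rightarrow> 'k mpoly \<Rightarrow> nat \<Rightarrow> nat \<Rightarrow> nat" where
  "rank_matrix n F l i j = (if i \<le> j then mult_rank n F l i j else 0)"

definition diag :: "nat \<Rightarrow> nat \<Rightarrow> (nat \<Rightarrow> nat \<Rightarrow> nat) \<Rightarrow> nat list" where
  "diag d i M = map (\<lambda>j. M j (j + i)) [0..<d - i + 1]"

text \<open>Hilbert function vector (h(0),...,h(d-i)) of A^(i) = S/Ann_S(l^i \<circ> F)\<close>
definition hilb_vec :: "nat \<Rightarrow> nat \<Rightarrow> 'k::field_char_0 mpoly \<Rightarrow> 'k mpoly \<Rightarrow> nat \<Rightarrow> nat list" where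
  "hilb_vec n d F l i = map (\<lambda>j. hilb n (diff_act (l ^ i) F) j) [0..<d - i + 1]"

end

theory Submission
  imports Defs
begin

(* The rank of multiplication by l^i from A_j to A_(j+i) is dim S_j minus the dimension of
   its kernel {g \<in> S_j. l^i g \<in> Ann(F)}, by rank-nullity.  Contraction is an action of
   S on R, so (l^i g) o F = g o (l^i o F) and the kernel is Ann(l^i o F)_j, whose
   codimension in S_j is h_(A^(i))(j). *)

context vector_space
begin

lemma scalars_zero_if_sum_in_span_Diff:
  assumes B: "independent B" "finite B" "B0 \<subseteq> B"
    and in_span: "(\<Sum>b\<in>B - B0. u b *s b) \<in> span B0" and c: "c \<in> B - B0"
  shows "u c = 0"
proof -
  have "finite B0" using B finite_subset by blast
  then obtain w where w: "(\<Sum>b\<in>B - B0. u b *s b) = (\<Sum>b\<in>B0. w b *s b)"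
    using in_span span_finite by auto
  define v where "v b = (if b \<in> B0 then - w b else u b)" for b
  have "(\<Sum>b\<in>B. v b *s b) = (\<Sum>b\<in>B - B0. u b *s b) - (\<Sum>b\<in>B0. w b *s b)"
    using B by (simp add: v_def sum.subset_diff[of B0 B] sum_subtractf[symmetric]
        sum.If_cases Int_absorb1 Diff_eq sum_negf)
  then have "(\<Sum>b\<in>B. v b *s b) = 0" using w by simp
  then have "v c = 0" using independentD[OF B(1,2) subset_refl] c by blast
  then show ?thesis using c by (simp add: v_def)
qed

lemma independent_image_Diff_Un:
  assumes f: "Vector_Spaces.linear scale scale f"
    and B: "independent B" "finite B" "B0 \<subseteq> B"
    and BK: "independent BK" "finite BK"
    and preimage: "{x \<in> span B. f x \<in> span BK} \<subseteq> span B0"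
  shows "inj_on f (B - B0)" "f ` (B - B0) \<inter> BK = {}" "independent (f ` (B - B0) \<union> BK)"
proof -
  note hom = module_hom_linearI[OF f]
  define C where "C = B - B0"
  have C_zero: "u c = 0" if "f (\<Sum>b\<in>C. u b *s b) \<in> span BK" "c \<in> C" for u c
  proof (rule scalars_zero_if_sum_in_span_Diff[OF B])
    have "(\<Sum>b\<in>C. u b *s b) \<in> span B"
      by (intro span_sum span_scale span_base) (auto simp: C_def)
    then show "(\<Sum>b\<in>B - B0. u b *s b) \<in> span B0" using that preimage by (auto simp: C_def)
  qed (use that in \<open>simp add: C_def\<close>)
  have finC: "finite C" using B(2) by (simp add: C_def)
  have sum_delta: "(\<Sum>b\<in>C. (if b = c then 1 else 0) *s b) = c" if "c \<in> C" for c
  proof -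
    have "(\<Sum>b\<in>C. (if b = c then 1 else 0) *s b) = (\<Sum>b\<in>C. if b = c then b else 0)"
      by (rule sum.cong) auto
    then show ?thesis using finC that by simp
  qed
  show inj: "inj_on f (B - B0)"
  proof (fold C_def, rule inj_onI, rule ccontr)
    fix x y assume xy: "x \<in> C" "y \<in> C" "f x = f y" "x \<noteq> y"
    let ?u = "\<lambda>b. (if b = x then 1 else 0) - (if b = y then 1 else 0 :: 'a)"
    have "f (\<Sum>b\<in>C. ?u b *s b) = f x - f y"
      using xy by (simp add: scale_left_diff_distrib sum_subtractf sum_delta module_hom.diff[OF hom])
    then have "?u x = 0" using C_zero[of ?u x] xy by (simp add: span_zero)
    then show False using xy by simp
  qed
  show disj: "f ` (B - B0) \<inter> BK = {}"
  proof (fold C_def, rule ccontr)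
    assume "f ` C \<inter> BK \<noteq> {}"
    then obtain c where c: "c \<in> C" "f c \<in> BK" by blast
    then have "(if c = c then 1 else 0) = (0::'a)"
      using C_zero[of "\<lambda>b. if b = c then 1 else 0" c] by (simp add: sum_delta span_base)
    then show False by simp
  qed
  show "independent (f ` (B - B0) \<union> BK)"
  proof (fold C_def, rule independent_if_scalars_zero)
    show "finite (f ` C \<union> BK)" using finC BK(2) by simp
  next
    fix g x assume sum0: "(\<Sum>x\<in>f ` C \<union> BK. g x *s x) = 0" and x: "x \<in> f ` C \<union> BK"
    have "(\<Sum>x\<in>f ` C \<union> BK. g x *s x) = (\<Sum>x\<in>f ` C. g x *s x) + (\<Sum>x\<in>BK. g x *s x)"
      using finC BK(2) disj[folded C_def] by (simp add: sum.union_disjoint)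
    also have "(\<Sum>x\<in>f ` C. g x *s x) = f (\<Sum>c\<in>C. g (f c) *s c)"
      by (simp add: sum.reindex[OF inj[folded C_def]] module_hom.sum[OF hom] module_hom.scale[OF hom])
    finally have split: "f (\<Sum>c\<in>C. g (f c) *s c) + (\<Sum>x\<in>BK. g x *s x) = 0"
      using sum0 by simp
    then have "f (\<Sum>c\<in>C. g (f c) *s c) \<in> span BK"
      by (simp add: eq_neg_iff_add_eq_0[symmetric] span_neg span_sum span_scale span_base)
    then have gC: "g (f c) = 0" if "c \<in> C" for c
      using C_zero[of "\<lambda>b. g (f b)" c] that by simp
    then have "(\<Sum>x\<in>BK. g x *s x) = 0"
      using split by (simp add: module_hom.sum[OF hom] module_hom.scale[OF hom] module_hom.zero[OF hom])
    from independentD[OF BK subset_refl this] show "g x = 0"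
      using x gC by blast
  qed
qed

lemma span_image_Un_eq:
  assumes f: "Vector_Spaces.linear scale scale f"
    and span_B: "span B = S" and B0: "f ` B0 \<subseteq> K" and span_BK: "span BK = K"
  shows "span (f ` S \<union> K) = span (f ` (B - B0) \<union> BK)"
proof -
  have K_sub: "K \<subseteq> span (f ` (B - B0) \<union> BK)"
    unfolding span_BK[symmetric] by (rule span_mono) blast
  then have "f ` B \<subseteq> span (f ` (B - B0) \<union> BK)"
    using B0 span_superset[of "f ` (B - B0) \<union> BK"] by blast
  then have "span (f ` B) \<subseteq> span (f ` (B - B0) \<union> BK)"
    by (rule span_minimal) (rule subspace_span)
  then have "f ` S \<union> K \<subseteq> span (f ` (B - B0) \<union> BK)"
    using K_sub by (simp add: module_hom.span_image[OF module_hom_linearI[OF f]] span_B)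
  moreover have "f ` (B - B0) \<union> BK \<subseteq> span (f ` S \<union> K)"
    using span_superset[of B] span_superset[of BK] span_superset[of "f ` S \<union> K"]
    unfolding span_B span_BK by blast
  ultimately show ?thesis
    by (simp add: span_eq)
qed

(* Rank-nullity for S --f--> V --> V/K, stated without quotient spaces. *)
lemma dim_span_image_Un:
  assumes f: "Vector_Spaces.linear scale scale f"
    and S: "subspace S" "S \<subseteq> span W" "finite W"
    and K: "subspace K" "K \<subseteq> span W'" "finite W'"
  shows "dim (span (f ` S \<union> K)) + dim {x \<in> S. f x \<in> K} = dim S + dim K"
proof -
  define W0 where "W0 = {x \<in> S. f x \<in> K}"
  obtain B0 where B0: "B0 \<subseteq> W0" "independent B0" "W0 \<subseteq> span B0" "card B0 = dim W0"
    using basis_exists by blast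
  have "B0 \<subseteq> S" using B0(1) by (auto simp: W0_def)
  obtain B where B: "B0 \<subseteq> B" "B \<subseteq> S" "independent B" "S \<subseteq> span B"
    using maximal_independent_subset_extend[OF \<open>B0 \<subseteq> S\<close> B0(2)] by blast
  obtain BK where BK: "BK \<subseteq> K" "independent BK" "K \<subseteq> span BK" "card BK = dim K"
    using basis_exists by blast
  have finB: "finite B"
    using independent_span_bound[OF S(3) B(3) order_trans[OF B(2) S(2)]] by simp
  have finBK: "finite BK"
    using independent_span_bound[OF K(3) BK(2) order_trans[OF BK(1) K(2)]] by simp
  have span_B: "span B = S" using span_subspace[OF B(2) B(4) S(1)] .
  have span_BK: "span BK = K" using span_subspace[OF BK(1) BK(3) K(1)] .
  have "{x \<in> span B. f x \<in> span BK} \<subseteq> span B0"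
    using B0(3) by (auto simp: span_B span_BK W0_def)
  note indep = independent_image_Diff_Un[OF f B(3) finB B(1) BK(2) finBK this]
  have "f ` B0 \<subseteq> K" using B0(1) by (auto simp: W0_def)
  then have "span (f ` S \<union> K) = span (f ` (B - B0) \<union> BK)"
    by (rule span_image_Un_eq[OF f span_B _ span_BK])
  then have "dim (span (f ` S \<union> K)) = card (B - B0) + card BK"
    using indep finB finBK
    by (simp add: dim_eq_card_independent card_Un_disjoint card_image)
  moreover have "card B = dim S" using basis_card_eq_dim[OF B(2,4,3)] .
  moreover have "card (B - B0) = card B - card B0"
    using card_Diff_subset[OF finite_subset[OF B(1) finB] B(1)] .
  moreover have "card B0 \<le> card B" using B(1) finB by (rule card_mono[rotated])
  ultimately show ?thesis using B0(4) BK(4) by (simp add: W0_def)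
qed

end

lemma lookup_smul: "Poly_Mapping.lookup (smul c p) m = c * Poly_Mapping.lookup p m"
  unfolding smul_def by transfer (simp add: when_def)

lemma keys_smul_subset: "Poly_Mapping.keys (smul c p) \<subseteq> Poly_Mapping.keys p"
  by (auto simp: in_keys_iff lookup_smul)

lemma smul_eq_mult: "smul c p = Poly_Mapping.single 0 c * p"
  unfolding smul_def by (rule mult_map_scale_conv_mult)

lemma module_smul: "module (smul :: 'k::field \<Rightarrow> 'k mpoly \<Rightarrow> 'k mpoly)"
  by unfold_locales (auto intro!: poly_mapping_eqI simp: lookup_smul lookup_add algebra_simps)

lemma vector_space_smul: "vector_space (smul :: 'k::field \<Rightarrow> 'k mpoly \<Rightarrow> 'k mpoly)"
  using module_smul by (simp add: module_def vector_space_def)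

lemma linear_mult_left: "Vector_Spaces.linear smul smul (\<lambda>p. q * p :: 'k::field mpoly)"
  using vector_space_smul
  by (auto simp: Vector_Spaces.linear_iff smul_eq_mult algebra_simps mult.left_commute)

lemma lookup_mult_keys:
  "Poly_Mapping.lookup (f * g) k = (\<Sum>a\<in>Poly_Mapping.keys f. \<Sum>b\<in>Poly_Mapping.keys g.
      Poly_Mapping.lookup f a * Poly_Mapping.lookup g b when k = a + b)"
proof -
  have "(\<Sum>b. Poly_Mapping.lookup g b when k = a + b) =
     (\<Sum>b\<in>Poly_Mapping.keys g. Poly_Mapping.lookup g b when k = a + b)" for a
    by (rule Sum_any.expand_superset) (auto simp: in_keys_iff)
  then show ?thesis unfolding lookup_mult
    by (subst Sum_any.expand_superset[of "Poly_Mapping.keys f"])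
       (auto simp: in_keys_iff sum_distrib_left when_def intro!: sum.cong)
qed

(* The contraction of X^(m + a) by x^a is deriv_coeff a m * X^m. *)
definition deriv_coeff :: "(nat \<Rightarrow>\<^sub>0 nat) \<Rightarrow> (nat \<Rightarrow>\<^sub>0 nat) \<Rightarrow> 'k::field_char_0" where
  "deriv_coeff a m = (\<Prod>i\<in>Poly_Mapping.keys (m + a).
     fact (Poly_Mapping.lookup (m + a) i) / fact (Poly_Mapping.lookup m i))"

lemma deriv_coeff_superset:
  assumes "finite I" "Poly_Mapping.keys (m + a) \<subseteq> I"
  shows "deriv_coeff a m =
    (\<Prod>i\<in>I. fact (Poly_Mapping.lookup (m + a) i) / fact (Poly_Mapping.lookup m i))"
  unfolding deriv_coeff_def
  by (rule prod.mono_neutral_left) (use assms in \<open>auto simp: in_keys_iff lookup_add\<close>)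

lemma deriv_coeff_add:
  "(deriv_coeff (a + b) m :: 'k::field_char_0) = deriv_coeff a m * deriv_coeff b (m + a)"
proof -
  let ?I = "Poly_Mapping.keys (m + a + b)"
  have "Poly_Mapping.keys (m + (a + b)) \<subseteq> ?I" "Poly_Mapping.keys (m + a) \<subseteq> ?I"
    by (auto simp: in_keys_iff lookup_add add.assoc)
  then show ?thesis
    by (simp add: deriv_coeff_superset[where I = ?I] prod.distrib[symmetric] lookup_add add.assoc)
qed

lemma mdvd_minus_eq_iff: "mdvd a b \<and> b - a = m \<longleftrightarrow> b = m + a"
  by (auto intro!: poly_mapping_eqI simp: mdvd_def lookup_add lookup_minus)

lemma lookup_diff_act:
  "Poly_Mapping.lookup (diff_act p G) m = (\<Sum>a\<in>Poly_Mapping.keys p.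
     Poly_Mapping.lookup p a * Poly_Mapping.lookup G (m + a) * deriv_coeff a m)"
proof -
  have entry: "Poly_Mapping.lookup (if mdvd a b then Poly_Mapping.single (b - a)
        (Poly_Mapping.lookup p a * Poly_Mapping.lookup G b *
          (\<Prod>i\<in>Poly_Mapping.keys b. fact (Poly_Mapping.lookup b i) /
             fact (Poly_Mapping.lookup b i - Poly_Mapping.lookup a i))) else 0) m =
      (if b = m + a then Poly_Mapping.lookup p a * Poly_Mapping.lookup G b * deriv_coeff a m else 0)"
    for a b
  proof (cases "b = m + a")
    case True
    then show ?thesis
      using mdvd_minus_eq_iff[of a b m] by (simp add: deriv_coeff_def lookup_add)
  next
    case False
    then show ?thesis
      using mdvd_minus_eq_iff[of a b m] by (auto simp: lookup_single when_def)
  qed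
  show ?thesis
    unfolding diff_act_def lookup_sum entry
    by (intro sum.cong refl) (auto simp: sum.delta' in_keys_iff)
qed

lemma lookup_diff_act_superset:
  assumes "finite A" "Poly_Mapping.keys p \<subseteq> A"
  shows "Poly_Mapping.lookup (diff_act p G) m = (\<Sum>a\<in>A.
     Poly_Mapping.lookup p a * Poly_Mapping.lookup G (m + a) * deriv_coeff a m)"
  unfolding lookup_diff_act
  by (rule sum.mono_neutral_left) (use assms in \<open>auto simp: in_keys_iff\<close>)

lemma linear_diff_act_left: "Vector_Spaces.linear smul smul (\<lambda>p. diff_act p G)"
proof -
  have "diff_act (p + q) G = diff_act p G + diff_act q G" for p q
  proof (rule poly_mapping_eqI)
    fix m
    let ?A = "Poly_Mapping.keys p \<union> Poly_Mapping.keys q"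
    have "Poly_Mapping.keys (p + q) \<subseteq> ?A" by (rule keys_add)
    then show "Poly_Mapping.lookup (diff_act (p + q) G) m =
        Poly_Mapping.lookup (diff_act p G + diff_act q G) m"
      by (simp add: lookup_add lookup_diff_act_superset[where A = ?A] algebra_simps sum.distrib)
  qed
  moreover have "diff_act (smul c p) G = smul c (diff_act p G)" for c p
  proof (rule poly_mapping_eqI)
    fix m
    show "Poly_Mapping.lookup (diff_act (smul c p) G) m = Poly_Mapping.lookup (smul c (diff_act p G)) m"
      using keys_smul_subset[of c p]
      by (simp add: lookup_smul lookup_diff_act_superset[where A = "Poly_Mapping.keys p"]
          algebra_simps sum_distrib_left)
  qed
  ultimately show ?thesis
    using vector_space_smul by (simp add: Vector_Spaces.linear_iff)
qed

lemma diff_act_zero_right [simp]: "diff_act p 0 = 0"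
  by (simp add: diff_act_def)

lemma diff_act_mult: "diff_act (p * q) G = diff_act p (diff_act q G)"
proof (rule poly_mapping_eqI)
  fix m
  let ?P = "Poly_Mapping.keys p" and ?Q = "Poly_Mapping.keys q"
  let ?C = "(\<lambda>(a, b). a + b) ` (?P \<times> ?Q)"
  let ?p = "Poly_Mapping.lookup p" and ?q = "Poly_Mapping.lookup q"
    and ?G = "Poly_Mapping.lookup G"
  have "Poly_Mapping.keys (p * q) \<subseteq> ?C" using keys_mult[of p q] by auto
  then have "Poly_Mapping.lookup (diff_act (p * q) G) m =
      (\<Sum>c\<in>?C. Poly_Mapping.lookup (p * q) c * ?G (m + c) * deriv_coeff c m)"
    by (simp add: lookup_diff_act_superset)
  also have "\<dots> = (\<Sum>c\<in>?C. \<Sum>a\<in>?P. \<Sum>b\<in>?Q.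
      ?p a * ?q b * ?G (m + c) * deriv_coeff c m when c = a + b)"
    by (simp add: lookup_mult_keys sum_distrib_right when_def) (intro sum.cong refl, simp)
  also have "\<dots> = (\<Sum>a\<in>?P. \<Sum>b\<in>?Q. \<Sum>c\<in>?C.
      ?p a * ?q b * ?G (m + c) * deriv_coeff c m when c = a + b)"
    by (subst sum.swap) (simp add: sum.swap[of _ ?C])
  also have "\<dots> = (\<Sum>a\<in>?P. \<Sum>b\<in>?Q. ?p a * ?q b * ?G (m + (a + b)) * deriv_coeff (a + b) m)"
    by (intro sum.cong refl) (auto simp: when_def sum.delta')
  also have "\<dots> = (\<Sum>a\<in>?P. ?p a *
      (\<Sum>b\<in>?Q. ?q b * ?G (m + a + b) * deriv_coeff b (m + a)) * deriv_coeff a m)"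
    by (simp add: sum_distrib_left sum_distrib_right deriv_coeff_add add.assoc mult_ac)
  also have "\<dots> = Poly_Mapping.lookup (diff_act p (diff_act q G)) m"
    by (simp add: lookup_diff_act)
  finally show "Poly_Mapping.lookup (diff_act (p * q) G) m =
      Poly_Mapping.lookup (diff_act p (diff_act q G)) m" .
qed

lemma mdeg_superset:
  assumes "finite I" "Poly_Mapping.keys m \<subseteq> I"
  shows "mdeg m = (\<Sum>i\<in>I. Poly_Mapping.lookup m i)"
  unfolding mdeg_def
  by (rule sum.mono_neutral_left) (use assms in \<open>auto simp: in_keys_iff\<close>)

lemma mdeg_add: "mdeg (a + b) = mdeg a + mdeg b"
proof -
  let ?I = "Poly_Mapping.keys a \<union> Poly_Mapping.keys b"
  have "Poly_Mapping.keys (a + b) \<subseteq> ?I" by (rule keys_add)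
  then show ?thesis
    by (simp add: mdeg_superset[where I = ?I] lookup_add sum.distrib)
qed

lemma homog_mult:
  assumes "p \<in> homog n i" "q \<in> homog n j"
  shows "p * q \<in> homog n (i + j)"
proof -
  have "Poly_Mapping.keys m \<subseteq> {..<n} \<and> mdeg m = i + j" if m: "m \<in> Poly_Mapping.keys (p * q)" for m
  proof -
    obtain a b where ab: "m = a + b" "a \<in> Poly_Mapping.keys p" "b \<in> Poly_Mapping.keys q"
      using keys_mult[of p q] m by blast
    then have "Poly_Mapping.keys a \<subseteq> {..<n}" "mdeg a = i" "Poly_Mapping.keys b \<subseteq> {..<n}" "mdeg b = j"
      using assms by (auto simp: homog_def polys_def)
    then show ?thesis
      using ab(1) keys_add[of a b] by (auto simp: mdeg_add)
  qed
  then show ?thesis by (auto simp: homog_def polys_def)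
qed

lemma homog_power:
  assumes "l \<in> homog n 1"
  shows "l ^ i \<in> homog n i"
proof (induction i)
  case 0
  show ?case by (simp add: homog_def polys_def mdeg_def)
next
  case (Suc i)
  then show ?case using homog_mult[OF assms Suc] by simp
qed

lemma subspace_polys: "module.subspace smul (polys n :: 'k::field mpoly set)"
  using keys_add keys_smul_subset
  by (fastforce simp: module.subspace_def[OF module_smul] polys_def)

lemma subspace_homog: "module.subspace smul (homog n j :: 'k::field mpoly set)"
  using keys_add keys_smul_subset
  by (fastforce simp: module.subspace_def[OF module_smul] homog_def polys_def)

lemma subspace_Ann_Int_homog: "module.subspace smul (Ann n G \<inter> homog n j :: 'k::field_char_0 mpoly set)"
proof -
  note hom = module_hom_linearI[OF linear_diff_act_left[of G]]
  have "Ann n G = polys n \<inter> {p. diff_act p G = 0}" by (auto simp: Ann_def)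
  then show ?thesis
    by (auto intro!: module.subspace_inter[OF module_smul] subspace_polys subspace_homog
        module_hom.subspace_kernel[OF hom])
qed

definition monomials :: "nat \<Rightarrow> nat \<Rightarrow> (nat \<Rightarrow>\<^sub>0 nat) set" where
  "monomials n j = {m. Poly_Mapping.keys m \<subseteq> {..<n} \<and> mdeg m = j}"

lemma lookup_le_mdeg: "Poly_Mapping.lookup m i \<le> mdeg m"
  by (cases "i \<in> Poly_Mapping.keys m") (auto simp: mdeg_def in_keys_iff intro: member_le_sum)

lemma finite_monomials: "finite (monomials n j)"
proof (rule finite_imageD)
  have "Poly_Mapping.lookup ` monomials n j \<subseteq>
      {f. \<forall>x. (x \<in> {..<n} \<longrightarrow> f x \<in> {..j}) \<and> (x \<notin> {..<n} \<longrightarrow> f x = 0)}"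
  proof (rule image_subsetI)
    fix m assume "m \<in> monomials n j"
    then have "Poly_Mapping.keys m \<subseteq> {..<n}" "mdeg m = j" by (simp_all add: monomials_def)
    then show "Poly_Mapping.lookup m \<in>
        {f. \<forall>x. (x \<in> {..<n} \<longrightarrow> f x \<in> {..j}) \<and> (x \<notin> {..<n} \<longrightarrow> f x = 0)}"
      using lookup_le_mdeg[of m] by (auto simp: in_keys_iff)
  qed
  then show "finite (Poly_Mapping.lookup ` monomials n j)"
    by (rule finite_subset) (intro finite_set_of_finite_funs finite_lessThan finite_atMost)
  show "inj_on Poly_Mapping.lookup (monomials n j)"
    by (simp add: inj_on_def)
qed

lemma sum_single_lookup: "(\<Sum>m\<in>Poly_Mapping.keys p. Poly_Mapping.single m (Poly_Mapping.lookup p m)) = p"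
  by (rule poly_mapping_eqI) (simp add: lookup_sum lookup_single when_def sum.delta' in_keys_iff)

lemma homog_subset_span_monomials:
  "homog n j \<subseteq> kspan ((\<lambda>m. Poly_Mapping.single m 1) ` monomials n j :: 'k::field mpoly set)"
proof
  fix p :: "'k mpoly" assume p: "p \<in> homog n j"
  have single: "Poly_Mapping.single m c = smul c (Poly_Mapping.single m 1)" for m and c :: 'k
    by (rule poly_mapping_eqI) (simp add: lookup_smul lookup_single when_def)
  have "(\<Sum>m\<in>Poly_Mapping.keys p. smul (Poly_Mapping.lookup p m) (Poly_Mapping.single m 1))
      \<in> kspan ((\<lambda>m. Poly_Mapping.single m 1) ` monomials n j)"
    unfolding kspan_def using p
    by (intro module.span_sum[OF module_smul] module.span_scale[OF module_smul]
        module.span_base[OF module_smul]) (auto simp: homog_def polys_def monomials_def)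
  then show "p \<in> kspan ((\<lambda>m. Poly_Mapping.single m 1) ` monomials n j)"
    by (simp only: single[symmetric] sum_single_lookup)
qed

lemma hilb_eq_codim:
  fixes G :: "'k::field_char_0 mpoly"
  shows "hilb n G j = kdim (homog n j :: 'k mpoly set) - kdim (Ann n G \<inter> homog n j)"
proof (cases "G = 0")
  case True
  then have "Ann n G \<inter> homog n j = homog n j" by (auto simp: Ann_def homog_def)
  then show ?thesis using True by (simp add: hilb_def)
qed (simp add: hilb_def)

lemma mult_preimage_Ann_Int_homog:
  assumes "q \<in> homog n i"
  shows "{p \<in> homog n j. q * p \<in> Ann n F \<inter> homog n (j + i)} = Ann n (diff_act q F) \<inter> homog n j"
proof -
  have "q * p \<in> homog n (j + i)" if "p \<in> homog n j" for p
    using homog_mult[OF assms that] by (simp add: add.commute)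
  moreover have "diff_act (q * p) F = diff_act p (diff_act q F)" for p
    by (metis diff_act_mult mult.commute)
  ultimately show ?thesis by (auto simp: Ann_def homog_def)
qed

lemma mult_rank_eq_hilb:
  fixes F l :: "'k::field_char_0 mpoly"
  assumes "l \<in> homog n 1"
  shows "mult_rank n F l j (j + i) = hilb n (diff_act (l ^ i) F) j"
proof -
  let ?K = "Ann n F \<inter> homog n (j + i)"
  note spans = homog_subset_span_monomials[unfolded kspan_def]
  have "kdim (kspan ((\<lambda>p. l ^ i * p) ` homog n j \<union> ?K)) + kdim {p \<in> homog n j. l ^ i * p \<in> ?K} =
      kdim (homog n j :: 'k mpoly set) + kdim ?K"
    unfolding kdim_def kspan_def
    by (rule vector_space.dim_span_image_Un[OF vector_space_smul linear_mult_left subspace_homog spans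
          finite_imageI[OF finite_monomials] subspace_Ann_Int_homog
          order_trans[OF Int_lower2 spans] finite_imageI[OF finite_monomials]])
  then show ?thesis
    using mult_preimage_Ann_Int_homog[OF homog_power[OF assms]]
    by (simp add: mult_rank_def hilb_eq_codim)
qed

theorem proposition3p4:
  fixes n d :: nat and F l :: "'k::field_char_0 mpoly"
  assumes "n \<ge> 2" and "d \<ge> 2"
    and "F \<in> homog n d" and "F \<noteq> 0"
    and "l \<in> homog n 1"
  shows "\<forall>i\<le>d. diag d i (rank_matrix n F l) = hilb_vec n d F l i"
  unfolding diag_def hilb_vec_def rank_matrix_def
  using mult_rank_eq_hilb[OF assms(5)] by simp

end
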